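(* A non-failed Boolean CSP is closed under the applications of (each of) the rules of the proof system BOOL if and only if it is hyper-arc consistent.
   Context: A Boolean CSP is $\langle \mathcal C; x_1\in D_1,\dots,x_n\in D_n\rangle$ with $D_i\subseteq\{0,1\}$ and $\mathcal C$ a finite set of Boolean constraints, each of one of the forms $u=v$ (relation $\{(0,0),(1,1)\}$), $\neg u=v$ ($\{(0,1),(1,0)\}$), $u\wedge v=w$ ($\{(0,0,0),(0,1,0),(1,0,0),(1,1,1)\}$), $u\vee v=w$ ($\{(0,0,0),(0,1,1),(1,0,1),(1,1,1)\}$) on distinct variables among $x_1,\dots,x_n$; each constraint is always understood as restricted to the current domains, i.e. intersected with the product of the domains of its variables. We write $x=d$ for $x\in\{d\}$. A CSP is failed if some domain is empty. A constraint is solved if it equals the product of the domains of its variables. A CSP $\phi$ is a reformulation of $\psi$ if removing the solved constraints from both yields the same CSP. The proof system BOOL consists of the rules (constraint, premise $\rightarrow$ conclusion; $x,y,z$ schematic): EQU1: $x=y$, $x=1\rightarrow y=1$; EQU2: $x=y$, $y=1\rightarrow x=1$; EQU3: $x=y$, $x=0\rightarrow y=0$; EQU4: $x=y$, $y=0\rightarrow x=0$; NOT1: $\neg x=y$, $x=1\rightarrow y=0$; NOT2: $\neg x=y$, $x=0\rightarrow y=1$; NOT3: $\neg x=y$, $y=1\rightarrow x=0$; NOT4: $\neg x=y$, $y=0\rightarrow x=1$; AND1: $x\wedge y=z$, $x=1,y=1\rightarrow z=1$; AND2: $x\wedge y=z$, $x=1,z=0\rightarrow y=0$; AND3: $x\wedge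 y=z$, $y=1,z=0\rightarrow x=0$; AND4: $x\wedge y=z$, $x=0\rightarrow z=0$; AND5: $x\wedge y=z$, $y=0\rightarrow z=0$; AND6: $x\wedge y=z$, $z=1\rightarrow x=1,y=1$; OR1: $x\vee y=z$, $x=1\rightarrow z=1$; OR2: $x\vee y=z$, $x=0,y=0\rightarrow z=0$; OR3: $x\vee y=z$, $x=0,z=1\rightarrow y=1$; OR4: $x\vee y=z$, $y=0,z=1\rightarrow x=1$; OR5: $x\vee y=z$, $y=1\rightarrow z=1$; OR6: $x\vee y=z$, $z=0\rightarrow x=0,y=0$. On CSPs, such a rule with constraint $c$, premise $X=s$ and conclusion $Y=t$ is the deterministic rule $\dfrac{\langle c;\ X=s,\ \text{other variables of } c \text{ in their domains}\rangle}{\langle \emptyset;\ X=s,\ \text{each } y_j\in Y \text{ with domain } D_{y_j}\cap\{t_j\},\ \text{other variables unchanged}\rangle}$. E.g. AND6 is $\dfrac{\langle x\wedge y=z;\ x\in D_x,y\in D_y,z=1\rangle}{\langle\emptyset;\ x\in D_x\cap\{1\},y\in D_y\cap\{1\},z=1\rangle}$. It can be applied to a CSP $\langle\mathcal C\cup\{c\};\mathcal D\cup\mathcal D_1\rangle$ where $\mathcal D_1$ matches its premise (the constraint $c$ instantiated by distinct variables, variables in $X$ having exactly the domains $\{s_i\}$); the result replaces $c$ and $\mathcal D_1$ by the conclusion's constraints and domain expressions. An application is relevant if its result is not a reformulation of the CSP it was applied to. A CSP is closed under the applications of a rule $R$ if either $R$ cannot be applied to it or no application of $R$ to it is relevant.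 A constraint $C$ is hyper-arc consistent if for every variable of $C$, each value in its domain participates in a solution to $C$ (a tuple of $C$ restricted to the current domains). A CSP is hyper-arc consistent if every constraint of it is. *)

theory Defs
  imports Main
begin

text \<open>Boolean values 0,1 are represented by False,True. A domain is a subset of the
  Boolean values, i.e. a bool set.\<close>

datatype 'v constr =
    CEq 'v 'v
  | CNot 'v 'v
  | CAnd 'v 'v 'v      \<comment> \<open>u and v = w\<close>
  | COr 'v 'v 'v       \<comment> \<open>u or v = w\<close>

fun cvars :: "'v constr \<Rightarrow> 'v list" where
  "cvars (CEq u v) = [u, v]"
| "cvars (CNot u v) = [u, v]"
| "cvars (CAnd u v w) = [u, v, w]"
| "cvars (COr u v w) = [u, v, w]"

fun crel :: "'v constr \<Rightarrow> bool list set" where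
  "crel (CEq _ _) = {[a, b] | a b. b = a}"
| "crel (CNot _ _) = {[a, b] | a b. b = (\<not> a)}"
| "crel (CAnd _ _ _) = {[a, b, c] | a b c. c = (a \<and> b)}"
| "crel (COr _ _ _) = {[a, b, c] | a b c. c = (a \<or> b)}"

definition wf_constr :: "'v constr \<Rightarrow> bool" where
  "wf_constr c \<longleftrightarrow> distinct (cvars c)"

definition prod_doms :: "('v \<Rightarrow> bool set) \<Rightarrow> 'v list \<Rightarrow> bool list set" where
  "prod_doms D xs = {t. list_all2 (\<lambda>x a. a \<in> D x) xs t}"

definition sols :: "('v \<Rightarrow> bool set) \<Rightarrow> 'v constr \<Rightarrow> bool list set" where
  "sols D c = crel c \<inter> prod_doms D (cvars c)"

definition solved :: "('v \<Rightarrow> bool set) \<Rightarrow> 'v constr \<Rightarrow> bool" where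
  "solved D c \<longleftrightarrow> sols D c = prod_doms D (cvars c)"

text \<open>A CSP: a set of constraints together with the domains; its variables are a set V.\<close>
type_synonym 'v csp = "'v constr set \<times> ('v \<Rightarrow> bool set)"

definition failed :: "'v set \<Rightarrow> 'v csp \<Rightarrow> bool" where
  "failed V P \<longleftrightarrow> (\<exists>x\<in>V. snd P x = {})"

definition wf_csp :: "'v set \<Rightarrow> 'v csp \<Rightarrow> bool" where
  "wf_csp V P \<longleftrightarrow> finite V \<and> finite (fst P) \<and>
     (\<forall>c\<in>fst P. wf_constr c \<and> set (cvars c) \<subseteq> V)"

definition reformulation :: "'v set \<Rightarrow> 'v csp \<Rightarrow> 'v csp \<Rightarrow> bool" where
  "reformulation V P Q \<longleftrightarrow>
     {c \<in> fst P. \<not> solved (snd P) c} = {c \<in> fst Q. \<not> solved (snd Q) c} \<and>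
     (\<forall>x\<in>V. snd P x = snd Q x)"

datatype rule =
    EQU1 | EQU2 | EQU3 | EQU4
  | NOT1 | NOT2 | NOT3 | NOT4
  | AND1 | AND2 | AND3 | AND4 | AND5 | AND6
  | OR1 | OR2 | OR3 | OR4 | OR5 | OR6

text \<open>Instantiation of a rule by a constraint: if the constraint has the rule's form,
  returns the premise (list of variable/value pairs X = s) and the conclusion (Y = t).\<close>
fun rule_inst :: "rule \<Rightarrow> 'v constr \<Rightarrow> (('v \<times> bool) list \<times> ('v \<times> bool) list) option" where
  "rule_inst EQU1 (CEq x y) = Some ([(x, True)], [(y, True)])"
| "rule_inst EQU2 (CEq x y) = Some ([(y, True)], [(x, True)])"
| "rule_inst EQU3 (CEq x y) = Some ([(x, False)], [(y, False)])"
| "rule_inst EQU4 (CEq x y) = Some ([(y, False)], [(x, False)])"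
| "rule_inst NOT1 (CNot x y) = Some ([(x, True)], [(y, False)])"
| "rule_inst NOT2 (CNot x y) = Some ([(x, False)], [(y, True)])"
| "rule_inst NOT3 (CNot x y) = Some ([(y, True)], [(x, False)])"
| "rule_inst NOT4 (CNot x y) = Some ([(y, False)], [(x, True)])"
| "rule_inst AND1 (CAnd x y z) = Some ([(x, True), (y, True)], [(z, True)])"
| "rule_inst AND2 (CAnd x y z) = Some ([(x, True), (z, False)], [(y, False)])"
| "rule_inst AND3 (CAnd x y z) = Some ([(y, True), (z, False)], [(x, False)])"
| "rule_inst AND4 (CAnd x y z) = Some ([(x, False)], [(z, False)])"
| "rule_inst AND5 (CAnd x y z) = Some ([(y, False)], [(z, False)])"
| "rule_inst AND6 (CAnd x y z) = Some ([(z, True)], [(x, True), (y, True)])"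
| "rule_inst OR1 (COr x y z) = Some ([(x, True)], [(z, True)])"
| "rule_inst OR2 (COr x y z) = Some ([(x, False), (y, False)], [(z, False)])"
| "rule_inst OR3 (COr x y z) = Some ([(x, False), (z, True)], [(y, True)])"
| "rule_inst OR4 (COr x y z) = Some ([(y, False), (z, True)], [(x, True)])"
| "rule_inst OR5 (COr x y z) = Some ([(y, True)], [(z, True)])"
| "rule_inst OR6 (COr x y z) = Some ([(z, False)], [(x, False), (y, False)])"
| "rule_inst _ _ = None"

definition applicable :: "rule \<Rightarrow> 'v constr \<Rightarrow> 'v csp \<Rightarrow> bool" where
  "applicable R c P \<longleftrightarrow> c \<in> fst P \<and>
     (\<exists>prem concl. rule_inst R c = Some (prem, concl) \<and>
        (\<forall>(x, s) \<in> set prem. snd P x = {s}))"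

definition apply_rule :: "rule \<Rightarrow> 'v constr \<Rightarrow> 'v csp \<Rightarrow> 'v csp" where
  "apply_rule R c P =
     (fst P - {c},
      (\<lambda>y. {a \<in> snd P y. \<forall>(z, t) \<in> set (snd (the (rule_inst R c))). z = y \<longrightarrow> a = t}))"

definition relevant :: "'v set \<Rightarrow> rule \<Rightarrow> 'v constr \<Rightarrow> 'v csp \<Rightarrow> bool" where
  "relevant V R c P \<longleftrightarrow> \<not> reformulation V (apply_rule R c P) P"

definition closed_under :: "'v set \<Rightarrow> rule \<Rightarrow> 'v csp \<Rightarrow> bool" where
  "closed_under V R P \<longleftrightarrow> (\<forall>c. applicable R c P \<longrightarrow> \<not> relevant V R c P)"

definition hac_constr :: "('v \<Rightarrow> bool set) \<Rightarrow> 'v constr \<Rightarrow> bool" where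
  "hac_constr D c \<longleftrightarrow>
     (\<forall>i < length (cvars c). \<forall>a \<in> D (cvars c ! i). \<exists>t \<in> sols D c. t ! i = a)"

definition hac :: "'v csp \<Rightarrow> bool" where
  "hac P \<longleftrightarrow> (\<forall>c \<in> fst P. hac_constr (snd P) c)"

end

theory Submission
  imports Defs
begin

text \<open>An application of a rule to a constraint \<open>c\<close> is irrelevant exactly when the domain of
  each conclusion variable already lies inside the concluded value and \<open>c\<close> is solved: then
  removing \<open>c\<close> and shrinking the domains changes nothing up to solved constraints. Closure
  under all rules is therefore a property of each constraint separately. For each of the four
  constraint forms, with nonempty domains, both this property and hyper-arc consistency become
  propositional conditions on which of 0 and 1 lie in the domains of its variables, and these
  conditions coincide; they do so even if the variables of the constraint are not distinct.\<close>

lemma all_rule_eq: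
  "(\<forall>R. Q R) \<longleftrightarrow> Q EQU1 \<and> Q EQU2 \<and> Q EQU3 \<and> Q EQU4 \<and> Q NOT1 \<and> Q NOT2 \<and> Q NOT3 \<and> Q NOT4 \<and>
     Q AND1 \<and> Q AND2 \<and> Q AND3 \<and> Q AND4 \<and> Q AND5 \<and> Q AND6 \<and>
     Q OR1 \<and> Q OR2 \<and> Q OR3 \<and> Q OR4 \<and> Q OR5 \<and> Q OR6" (is "_ \<longleftrightarrow> ?all")
proof
  show ?all if "\<forall>R. Q R" using that by simp
  show "\<forall>R. Q R" if ?all
  proof
    fix R
    show "Q R" using that by (cases R) simp_all
  qed
qed

lemma bool_set_eq_singleton_iff: "(S = {b}) \<longleftrightarrow> b \<in> S \<and> (\<not> b) \<notin> S"
  by (cases b) (auto simp: set_eq_iff all_bool_eq)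

lemma bool_set_subset_singleton_iff: "(S \<subseteq> {b}) \<longleftrightarrow> (\<not> b) \<notin> S"
  by (cases b) (auto simp: subset_iff all_bool_eq)

lemma Nil_in_prod_doms_Nil [simp]: "[] \<in> prod_doms D []"
  by (simp add: prod_doms_def)

lemma Cons_in_prod_doms_Cons [simp]:
  "a # t \<in> prod_doms D (x # xs) \<longleftrightarrow> a \<in> D x \<and> t \<in> prod_doms D xs"
  by (simp add: prod_doms_def)

lemma ball_prod_doms_Nil [simp]: "(\<forall>t\<in>prod_doms D []. Q t) \<longleftrightarrow> Q []"
  by (simp add: prod_doms_def)

lemma ball_prod_doms_Cons [simp]:
  "(\<forall>t\<in>prod_doms D (x # xs). Q t) \<longleftrightarrow> (\<forall>a\<in>D x. \<forall>t\<in>prod_doms D xs. Q (a # t))"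
  by (auto simp: prod_doms_def list_all2_Cons1)

lemma bex_prod_doms_Nil [simp]: "(\<exists>t\<in>prod_doms D []. Q t) \<longleftrightarrow> Q []"
  by (simp add: prod_doms_def)

lemma bex_prod_doms_Cons [simp]:
  "(\<exists>t\<in>prod_doms D (x # xs). Q t) \<longleftrightarrow> (\<exists>a\<in>D x. \<exists>t\<in>prod_doms D xs. Q (a # t))"
  by (auto simp: prod_doms_def list_all2_Cons1)

lemma solved_altdef: "solved D c \<longleftrightarrow> (\<forall>t\<in>prod_doms D (cvars c). t \<in> crel c)"
  unfolding solved_def sols_def by blast

lemma hac_constr_altdef:
  "hac_constr D c \<longleftrightarrow>
     (\<forall>i < length (cvars c). \<forall>a \<in> D (cvars c ! i).
        \<exists>t \<in> prod_doms D (cvars c). t \<in> crel c \<and> t ! i = a)"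
  unfolding hac_constr_def sols_def by blast

definition rule_closed_at :: "rule \<Rightarrow> 'v constr \<Rightarrow> ('v \<Rightarrow> bool set) \<Rightarrow> bool" where
  "rule_closed_at R c D \<longleftrightarrow>
     (\<forall>prem concl. rule_inst R c = Some (prem, concl) \<longrightarrow> (\<forall>(x, s) \<in> set prem. D x = {s}) \<longrightarrow>
        (\<forall>(y, t) \<in> set concl. D y \<subseteq> {t}) \<and> solved D c)"

lemma rule_inst_concl_vars:
  "rule_inst R c = Some (prem, concl) \<Longrightarrow> fst ` set concl \<subseteq> set (cvars c)"
  by (cases R; cases c) auto

lemma reformulation_apply_rule_iff:
  assumes c: "c \<in> C" and vars: "set (cvars c) \<subseteq> V"
    and inst: "rule_inst R c = Some (prem, concl)"
  shows "reformulation V (apply_rule R c (C, D)) (C, D) \<longleftrightarrow>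
           (\<forall>(y, t) \<in> set concl. D y \<subseteq> {t}) \<and> solved D c"
proof -
  define D' where "D' = (\<lambda>y. {a \<in> D y. \<forall>(z, t) \<in> set concl. z = y \<longrightarrow> a = t})"
  have apply_eq: "apply_rule R c (C, D) = (C - {c}, D')"
    using inst by (simp add: apply_rule_def D'_def)
  have D'_eq_iff: "D' y = D y \<longleftrightarrow> (\<forall>t. (y, t) \<in> set concl \<longrightarrow> D y \<subseteq> {t})" for y
    by (auto simp: D'_def)
  have "y \<in> V" if "(y, t) \<in> set concl" for y t
    using rule_inst_concl_vars[OF inst] vars that by force
  then have doms_iff: "(\<forall>x\<in>V. D' x = D x) \<longleftrightarrow> (\<forall>(y, t) \<in> set concl. D y \<subseteq> {t})"
    unfolding D'_eq_iff by blast
  have D'_eq: "D' = D" if "\<forall>(y, t) \<in> set concl. D y \<subseteq> {t}"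
    using that by (auto simp: fun_eq_iff D'_eq_iff)
  have drop_c_iff: "{c' \<in> C - {c}. \<not> solved D c'} = {c' \<in> C. \<not> solved D c'} \<longleftrightarrow> solved D c"
    using c by blast
  show ?thesis
  proof
    assume "reformulation V (apply_rule R c (C, D)) (C, D)"
    then have sets: "{c' \<in> C - {c}. \<not> solved D' c'} = {c' \<in> C. \<not> solved D c'}"
      and doms: "\<forall>x\<in>V. D' x = D x"
      unfolding reformulation_def apply_eq fst_conv snd_conv by blast+
    from doms have entailed: "\<forall>(y, t) \<in> set concl. D y \<subseteq> {t}"
      using doms_iff by blast
    moreover from sets have "solved D c"
      unfolding D'_eq[OF entailed] drop_c_iff .
    ultimately show "(\<forall>(y, t) \<in> set concl. D y \<subseteq> {t}) \<and> solved D c" ..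
  next
    assume "(\<forall>(y, t) \<in> set concl. D y \<subseteq> {t}) \<and> solved D c"
    then have entailed: "\<forall>(y, t) \<in> set concl. D y \<subseteq> {t}" and "solved D c"
      by blast+
    then show "reformulation V (apply_rule R c (C, D)) (C, D)"
      unfolding reformulation_def apply_eq fst_conv snd_conv D'_eq[OF entailed]
      using drop_c_iff by blast
  qed
qed

lemma closed_under_iff_rule_closed_at:
  assumes vars: "\<forall>c \<in> C. set (cvars c) \<subseteq> V"
  shows "closed_under V R (C, D) \<longleftrightarrow> (\<forall>c \<in> C. rule_closed_at R c D)"
proof -
  have "(applicable R c (C, D) \<longrightarrow> \<not> relevant V R c (C, D)) \<longleftrightarrow> rule_closed_at R c D"
    if c: "c \<in> C" for c
  proof (cases "rule_inst R c")
    case None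
    then show ?thesis
      by (simp add: applicable_def rule_closed_at_def)
  next
    case (Some inst)
    then obtain prem concl where inst: "rule_inst R c = Some (prem, concl)"
      by (cases inst) blast
    show ?thesis
      unfolding applicable_def relevant_def rule_closed_at_def
        reformulation_apply_rule_iff[OF c vars[rule_format, OF c] inst]
      using c inst by simp
  qed
  then show ?thesis
    unfolding closed_under_def by (auto simp: applicable_def)
qed

lemma all_rule_closed_at_iff_hac_constr:
  assumes "\<forall>x \<in> set (cvars c). D x \<noteq> {}"
  shows "(\<forall>R. rule_closed_at R c D) \<longleftrightarrow> hac_constr D c"
  using assms
  by (cases c)
    (simp_all add: all_rule_eq rule_closed_at_def solved_altdef hac_constr_altdef
       less_Suc_eq all_conj_distrib,
     simp_all add: bool_set_eq_singleton_iff bool_set_subset_singleton_iff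
       Ball_def Bex_def all_bool_eq ex_bool_eq ex_in_conv[symmetric],
     argo+)

theorem theorem4:
  fixes V :: "'v set" and P :: "'v csp"
  assumes "wf_csp V P"
    and "\<not> failed V P"
  shows "(\<forall>R. closed_under V R P) \<longleftrightarrow> hac P"
proof -
  obtain C D where P: "P = (C, D)"
    by fastforce
  have vars: "\<forall>c \<in> C. set (cvars c) \<subseteq> V"
    using assms(1) by (simp add: wf_csp_def P)
  have nonempty: "\<forall>x \<in> set (cvars c). D x \<noteq> {}" if "c \<in> C" for c
    using vars that assms(2) by (auto simp: failed_def P)
  have "(\<forall>R. closed_under V R P) \<longleftrightarrow> (\<forall>c \<in> C. \<forall>R. rule_closed_at R c D)"
    unfolding P closed_under_iff_rule_closed_at[OF vars] by blast
  also have "\<dots> \<longleftrightarrow> (\<forall>c \<in> C. hac_constr D c)"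
    using all_rule_closed_at_iff_hac_constr[OF nonempty] by blast
  finally show ?thesis
    unfolding hac_def P by simp
qed

end
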